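(* Let $1\le k\le\ell\le\lfloor n/2\rfloor$, $\lambda=(n-k,k)$, $\mu=(n-\ell,\ell)$, and let $P$ be the random transpositions chain on $\mathcal{T}_{\lambda,\mu}$ with stationary distribution $\pi_{\lambda,\mu}$. If $c>0$ and $t=(n/4)(\log(k)+c)$, then \[ \sum_{\mathbf{x}\in\mathcal{T}_{\lambda,\mu}}\pi_{\lambda,\mu}(\mathbf{x})\,\|P^t(\mathbf{x},\cdot)-\pi_{\lambda,\mu}\|_{TV}^2\le e^{-c}. \] If $t=cn/4$, then \[ \sum_{\mathbf{x}\in\mathcal{T}_{\lambda,\mu}}\pi_{\lambda,\mu}(\mathbf{x})\,\chi^2_{\mathbf{x}}(t)\ge 1-c. \]
   Context: $\mathcal{T}_{\lambda,\mu}$ is the set of $2\times2$ nonnegative integer tables with row sums $n-k,k$ and column sums $n-\ell,\ell$. The Fisher–Yates distribution is $\pi_{\lambda,\mu}(T)=\frac1{n!}\prod_{i,j}\frac{\lambda_i!\mu_j!}{T_{ij}!}$. The random transpositions chain: for $T'$ obtained from $T$ by subtracting $1$ at cells $(i_1,j_1),(i_2,j_2)$ and adding $1$ at $(i_1,j_2),(i_2,j_1)$ (with $i_1\ne i_2$, $j_1\ne j_2$), $P(T,T')=2T_{i_1j_1}T_{i_2j_2}/n^2$; $P(T,T)$ is the remaining mass. $\|\nu-\pi\|_{TV}=\sup_A|\nu(A)-\pi(A)|$ and $\chi^2_{\mathbf{x}}(t)=\sum_{\mathbf{y}}\frac{(P^t(\mathbf{x},\mathbf{y})-\pi_{\lambda,\mu}(\mathbf{y}))^2}{\pi_{\lambda,\mu}(\mathbf{y})}$.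 *)

theory Defs
  imports Complex_Main
begin

text \<open>A 2x2 table T is encoded as the 4-tuple (T11, T12, T21, T22).\<close>
type_synonym table = "nat \<times> nat \<times> nat \<times> nat"

definition tables :: "nat \<Rightarrow> nat \<Rightarrow> nat \<Rightarrow> table set" where
  "tables n k l = {(a,b,c,d). a + b = n - k \<and> c + d = k \<and> a + c = n - l \<and> b + d = l}"

definition fy :: "nat \<Rightarrow> nat \<Rightarrow> nat \<Rightarrow> table \<Rightarrow> real" where
  "fy n k l T = (case T of (a,b,c,d) \<Rightarrow>
     (fact (n-k) * fact k * fact (n-l) * fact l) /
     (fact n * fact a * fact b * fact c * fact d))"

definition rt_off :: "nat \<Rightarrow> table \<Rightarrow> table \<Rightarrow> real" where
  "rt_off n T T' = (case T of (a,b,c,d) \<Rightarrow>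
     if T' = T then 0
     else if 1 \<le> a \<and> 1 \<le> d \<and> T' = (a - 1, b + 1, c + 1, d - 1)
       then 2 * real a * real d / (real n)^2
     else if 1 \<le> b \<and> 1 \<le> c \<and> T' = (a + 1, b - 1, c - 1, d + 1)
       then 2 * real b * real c / (real n)^2
     else 0)"

definition rt :: "nat \<Rightarrow> nat \<Rightarrow> nat \<Rightarrow> table \<Rightarrow> table \<Rightarrow> real" where
  "rt n k l T T' = (if T' = T
     then 1 - (\<Sum>S\<in>tables n k l - {T}. rt_off n T S)
     else rt_off n T T')"

fun rt_pow :: "nat \<Rightarrow> nat \<Rightarrow> nat \<Rightarrow> nat \<Rightarrow> table \<Rightarrow> table \<Rightarrow> real" where
  "rt_pow n k l 0 x y = (if x = y then 1 else 0)"
| "rt_pow n k l (Suc t) x y = (\<Sum>z\<in>tables n k l. rt_pow n k l t x z * rt n k l z y)"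

definition tv_dist :: "nat \<Rightarrow> nat \<Rightarrow> nat \<Rightarrow> nat \<Rightarrow> table \<Rightarrow> real" where
  "tv_dist n k l t x = (SUP A\<in>Pow (tables n k l).
     \<bar>(\<Sum>y\<in>A. rt_pow n k l t x y) - (\<Sum>y\<in>A. fy n k l y)\<bar>)"

definition chi2 :: "nat \<Rightarrow> nat \<Rightarrow> nat \<Rightarrow> nat \<Rightarrow> table \<Rightarrow> real" where
  "chi2 n k l t x = (\<Sum>y\<in>tables n k l. (rt_pow n k l t x y - fy n k l y)^2 / fy n k l y)"

end

theory Submission
  imports Defs "HOL-Analysis.Convex"
begin

(* A table of T_(lambda,mu) is determined by its (2,2) entry d in {0..k}, and the random
   transpositions chain becomes a birth-death chain on {0..k}, reversible with respect to the
   hypergeometric law pi = pi_(lambda,mu).  For a reversible chain the pi-average of chi^2_x(t)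
   is tr P^(2t) - 1.  Conjugating P by the binomial matrix (d choose i), whose inverse is
   ((-1)^(j+e) (j choose e)), makes it upper bidiagonal with diagonal
   beta_j = 1 - 2 j (n - j + 1) / n^2, so the trace is the sum of the beta_j^(2t), with beta_0 = 1.
   As 0 <= beta_j <= beta_1 = 1 - 2/n for 1 <= j <= k, the average lies between
   (1 - 2/n)^(2t) >= 1 - 4t/n and k (1 - 2/n)^(2t) <= k exp (-4t/n).  The total variation part
   follows from |P^t(x,A) - pi(A)|^2 <= pi(A) chi^2_x(t), which is Cauchy-Schwarz. *)

fun kernel_pow :: "'a set \<Rightarrow> ('a \<Rightarrow> 'a \<Rightarrow> real) \<Rightarrow> nat \<Rightarrow> 'a \<Rightarrow> 'a \<Rightarrow> real" where
  "kernel_pow S P 0 x y = of_bool (x = y)"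
| "kernel_pow S P (Suc t) x y = (\<Sum>z\<in>S. kernel_pow S P t x z * P z y)"

definition kmult :: "'a set \<Rightarrow> ('a \<Rightarrow> 'a \<Rightarrow> real) \<Rightarrow> ('a \<Rightarrow> 'a \<Rightarrow> real) \<Rightarrow> 'a \<Rightarrow> 'a \<Rightarrow> real" where
  "kmult S A B x y = (\<Sum>z\<in>S. A x z * B z y)"

lemma kmult_assoc: "kmult S (kmult S A B) C = kmult S A (kmult S B C)"
  unfolding kmult_def
  by (intro ext) (simp add: sum_distrib_left sum_distrib_right mult.assoc, rule sum.swap)

lemma trace_kmult_commute: "(\<Sum>x\<in>S. kmult S A B x x) = (\<Sum>x\<in>S. kmult S B A x x)"
  unfolding kmult_def by (subst sum.swap) (simp add: mult.commute)

lemma kmult_cong_left: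
  assumes "\<And>z. z \<in> S \<Longrightarrow> A x z = A' x z"
  shows "kmult S A B x y = kmult S A' B x y"
  using assms unfolding kmult_def by simp

lemma kmult_id_left:
  assumes "x \<in> S" "\<And>z. z \<in> S \<Longrightarrow> A x z = of_bool (x = z)" "finite S"
  shows "kmult S A B x y = B x y"
  using assms unfolding kmult_def by (simp cong: sum.cong)

lemma kmult_id_right:
  assumes "y \<in> S" "\<And>z. z \<in> S \<Longrightarrow> B z y = of_bool (z = y)" "finite S"
  shows "kmult S A B x y = A x y"
  using assms unfolding kmult_def by (simp cong: sum.cong)

lemma kernel_pow_Suc_kmult: "kernel_pow S P (Suc t) = kmult S (kernel_pow S P t) P"
  by (intro ext) (simp add: kmult_def)

lemma kernel_pow_add:
  assumes "finite S" "y \<in> S"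
  shows "kernel_pow S P (s + t) x y = kmult S (kernel_pow S P s) (kernel_pow S P t) x y"
  using \<open>y \<in> S\<close>
proof (induction t arbitrary: y)
  case 0
  then show ?case using \<open>finite S\<close> by (simp add: kmult_def)
next
  case (Suc t)
  have "kernel_pow S P (s + Suc t) x y = kmult S (kernel_pow S P (s + t)) P x y"
    by (simp add: kmult_def)
  also have "\<dots> = kmult S (kmult S (kernel_pow S P s) (kernel_pow S P t)) P x y"
    by (rule kmult_cong_left) (rule Suc.IH)
  also have "\<dots> = kmult S (kernel_pow S P s) (kernel_pow S P (Suc t)) x y"
    by (simp only: kmult_assoc kernel_pow_Suc_kmult)
  finally show ?case .
qed

lemma kernel_pow_Suc_left:
  assumes "finite S" "x \<in> S" "y \<in> S"
  shows "kernel_pow S P (Suc t) x y = kmult S P (kernel_pow S P t) x y"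
  using kernel_pow_add[of S y P 1 t x] assms by (simp add: kmult_def)

lemma kernel_pow_row_sum:
  assumes "finite S" and rows: "\<And>x. x \<in> S \<Longrightarrow> (\<Sum>y\<in>S. P x y) = 1" and "x \<in> S"
  shows "(\<Sum>y\<in>S. kernel_pow S P t x y) = 1"
proof (induction t)
  case 0
  then show ?case using assms by simp
next
  case (Suc t)
  have "(\<Sum>y\<in>S. kernel_pow S P (Suc t) x y) = (\<Sum>z\<in>S. kernel_pow S P t x z * (\<Sum>y\<in>S. P z y))"
    by (simp add: sum_distrib_left) (rule sum.swap)
  then show ?case using Suc rows by simp
qed

lemma kernel_pow_intertwine:
  assumes "finite S" and PV: "\<And>x y. x \<in> S \<Longrightarrow> y \<in> S \<Longrightarrow> kmult S P V x y = kmult S V U x y"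
    and "x \<in> S" "y \<in> S"
  shows "kmult S (kernel_pow S P t) V x y = kmult S V (kernel_pow S U t) x y"
  using \<open>y \<in> S\<close>
proof (induction t arbitrary: y)
  case 0
  then show ?case using assms by (simp add: kmult_def)
next
  case (Suc t)
  have "kmult S (kernel_pow S P (Suc t)) V x y = kmult S (kernel_pow S P t) (kmult S V U) x y"
    using PV Suc.prems by (simp add: kernel_pow_Suc_kmult kmult_assoc) (simp add: kmult_def)
  also have "\<dots> = kmult S V (kernel_pow S U (Suc t)) x y"
    using Suc.IH by (simp add: kernel_pow_Suc_kmult flip: kmult_assoc) (simp add: kmult_def)
  finally show ?case .
qed

lemma trace_kernel_pow_similar:
  assumes "finite S"
    and VW: "\<And>x y. x \<in> S \<Longrightarrow> y \<in> S \<Longrightarrow> kmult S V W x y = of_bool (x = y)"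
    and WV: "\<And>x y. x \<in> S \<Longrightarrow> y \<in> S \<Longrightarrow> kmult S W V x y = of_bool (x = y)"
    and PV: "\<And>x y. x \<in> S \<Longrightarrow> y \<in> S \<Longrightarrow> kmult S P V x y = kmult S V U x y"
  shows "(\<Sum>x\<in>S. kernel_pow S P t x x) = (\<Sum>x\<in>S. kernel_pow S U t x x)"
proof -
  let ?KP = "kernel_pow S P t" and ?KU = "kernel_pow S U t"
  have "?KP x x = kmult S (kmult S V ?KU) W x x" if "x \<in> S" for x
  proof -
    have "kmult S ?KP (kmult S V W) x x = ?KP x x"
      by (rule kmult_id_right[OF that _ \<open>finite S\<close>]) (simp add: VW that)
    then have "?KP x x = kmult S (kmult S ?KP V) W x x"
      by (simp only: kmult_assoc)
    also have "\<dots> = kmult S (kmult S V ?KU) W x x"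
      by (rule kmult_cong_left) (rule kernel_pow_intertwine[OF \<open>finite S\<close> PV that])
    finally show ?thesis .
  qed
  then have "(\<Sum>x\<in>S. ?KP x x) = (\<Sum>x\<in>S. kmult S (kmult S V ?KU) W x x)"
    by simp
  also have "\<dots> = (\<Sum>x\<in>S. kmult S (kmult S W V) ?KU x x)"
    by (subst trace_kmult_commute) (simp only: kmult_assoc)
  also have "\<dots> = (\<Sum>x\<in>S. ?KU x x)"
    by (rule sum.cong[OF refl], rule kmult_id_left[OF _ _ \<open>finite S\<close>]) (auto simp: WV)
  finally show ?thesis .
qed

lemma kernel_pow_upper_triangular:
  fixes U :: "'a::linorder \<Rightarrow> 'a \<Rightarrow> real"
  assumes upper: "\<And>i j. i \<in> S \<Longrightarrow> j \<in> S \<Longrightarrow> j < i \<Longrightarrow> U i j = 0" and "i \<in> S" "j \<in> S" "j < i"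
  shows "kernel_pow S U t i j = 0"
  using \<open>j \<in> S\<close> \<open>j < i\<close>
proof (induction t arbitrary: j)
  case (Suc t)
  have "kernel_pow S U t i r * U r j = 0" if "r \<in> S" for r
    using Suc upper[OF that] \<open>i \<in> S\<close> that by (cases "r < i") auto
  then show ?case by (simp add: sum.neutral)
qed simp

lemma kernel_pow_upper_triangular_diag:
  fixes U :: "'a::linorder \<Rightarrow> 'a \<Rightarrow> real"
  assumes "finite S" and upper: "\<And>i j. i \<in> S \<Longrightarrow> j \<in> S \<Longrightarrow> j < i \<Longrightarrow> U i j = 0" and "i \<in> S"
  shows "kernel_pow S U t i i = U i i ^ t"
proof (induction t)
  case (Suc t)
  have "kernel_pow S U t i r * U r i = of_bool (r = i) * U i i ^ Suc t" if "r \<in> S" for r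
    using Suc kernel_pow_upper_triangular[OF upper \<open>i \<in> S\<close> that] upper[OF that \<open>i \<in> S\<close>]
    by (cases r i rule: linorder_cases) auto
  then show ?case using \<open>finite S\<close> \<open>i \<in> S\<close> by simp
qed simp

locale reversible_kernel =
  fixes S :: "'a set" and P :: "'a \<Rightarrow> 'a \<Rightarrow> real" and \<pi> :: "'a \<Rightarrow> real"
  assumes finite: "finite S"
    and pos: "\<And>x. x \<in> S \<Longrightarrow> \<pi> x > 0"
    and total: "(\<Sum>x\<in>S. \<pi> x) = 1"
    and rows: "\<And>x. x \<in> S \<Longrightarrow> (\<Sum>y\<in>S. P x y) = 1"
    and balance: "\<And>x y. x \<in> S \<Longrightarrow> y \<in> S \<Longrightarrow> \<pi> x * P x y = \<pi> y * P y x"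
begin

lemma kernel_pow_balance:
  assumes "x \<in> S" "y \<in> S"
  shows "\<pi> x * kernel_pow S P t x y = \<pi> y * kernel_pow S P t y x"
  using \<open>y \<in> S\<close>
proof (induction t arbitrary: y)
  case (Suc t)
  have "\<pi> x * kernel_pow S P (Suc t) x y = (\<Sum>z\<in>S. (\<pi> x * kernel_pow S P t x z) * P z y)"
    by (simp add: sum_distrib_left mult.assoc)
  also have "\<dots> = (\<Sum>z\<in>S. kernel_pow S P t z x * (\<pi> z * P z y))"
    using Suc.IH by (simp add: mult_ac)
  also have "\<dots> = (\<Sum>z\<in>S. kernel_pow S P t z x * (\<pi> y * P y z))"
    using balance Suc.prems by simp
  also have "\<dots> = \<pi> y * kernel_pow S P (Suc t) y x"
    by (simp only: kernel_pow_Suc_left[OF finite Suc.prems \<open>x \<in> S\<close>])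
      (simp add: kmult_def sum_distrib_left mult_ac)
  finally show ?case .
qed simp

(* By reversibility pi x * P^t(x,y)^2 / pi y = P^t(x,y) * P^t(y,x), and these products sum
   to the trace of P^(2t). *)
lemma chi2_average_eq_trace:
  "(\<Sum>x\<in>S. \<pi> x * (\<Sum>y\<in>S. (kernel_pow S P t x y - \<pi> y)\<^sup>2 / \<pi> y))
     = (\<Sum>x\<in>S. kernel_pow S P (2 * t) x x) - 1"
proof -
  let ?K = "kernel_pow S P t"
  have expand: "\<pi> x * (?K x y - \<pi> y)\<^sup>2 / \<pi> y = ?K x y * ?K y x - 2 * (\<pi> x * ?K x y) + \<pi> x * \<pi> y"
    if "x \<in> S" "y \<in> S" for x y
  proof -
    have "\<pi> x * (?K x y - \<pi> y)\<^sup>2 / \<pi> y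
        = (\<pi> x * ?K x y) * ?K x y / \<pi> y - 2 * (\<pi> x * ?K x y) + \<pi> x * \<pi> y"
      using pos[OF \<open>y \<in> S\<close>] by (simp add: field_simps power2_eq_square)
    then show ?thesis
      using pos[OF \<open>y \<in> S\<close>] by (simp add: kernel_pow_balance[OF that])
  qed
  have return: "(\<Sum>x\<in>S. \<Sum>y\<in>S. ?K x y * ?K y x) = (\<Sum>x\<in>S. kernel_pow S P (2 * t) x x)"
    using kernel_pow_add[OF finite] by (simp add: kmult_def mult_2)
  have mass: "(\<Sum>x\<in>S. \<pi> x * (\<Sum>y\<in>S. ?K x y)) = 1"
    using total by (simp add: kernel_pow_row_sum[OF finite rows])
  have "(\<Sum>x\<in>S. \<pi> x * (\<Sum>y\<in>S. (?K x y - \<pi> y)\<^sup>2 / \<pi> y))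
      = (\<Sum>x\<in>S. \<Sum>y\<in>S. ?K x y * ?K y x - 2 * (\<pi> x * ?K x y) + \<pi> x * \<pi> y)"
    by (simp add: sum_distrib_left expand cong: sum.cong)
  also have "\<dots> = (\<Sum>x\<in>S. kernel_pow S P (2 * t) x x)
      - 2 * (\<Sum>x\<in>S. \<pi> x * (\<Sum>y\<in>S. ?K x y)) + (\<Sum>x\<in>S. \<pi> x) * (\<Sum>y\<in>S. \<pi> y)"
    by (simp only: sum.distrib sum_subtractf return sum_distrib_left sum_distrib_right)
      (simp add: mult.commute)
  also have "\<dots> = (\<Sum>x\<in>S. kernel_pow S P (2 * t) x x) - 1"
    using mass total by simp
  finally show ?thesis .
qed

end

lemma subset_discrepancy_sq_le_chi2:
  fixes p q :: "'a \<Rightarrow> real"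
  assumes "finite S" and pos: "\<And>y. y \<in> S \<Longrightarrow> p y > 0" and total: "(\<Sum>y\<in>S. p y) = 1"
    and "A \<subseteq> S"
  shows "((\<Sum>y\<in>A. q y) - (\<Sum>y\<in>A. p y))\<^sup>2 \<le> (\<Sum>y\<in>S. (q y - p y)\<^sup>2 / p y)"
proof -
  have posA: "p y > 0" if "y \<in> A" for y
    using pos that \<open>A \<subseteq> S\<close> by blast
  have "(\<Sum>y\<in>A. sqrt (p y) * ((q y - p y) / sqrt (p y))) = (\<Sum>y\<in>A. q y - p y)"
    using posA by (intro sum.cong) (auto simp: less_imp_neq[symmetric])
  then have "((\<Sum>y\<in>A. q y) - (\<Sum>y\<in>A. p y))\<^sup>2 = (\<Sum>y\<in>A. sqrt (p y) * ((q y - p y) / sqrt (p y)))\<^sup>2"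
    by (simp add: sum_subtractf)
  also have "\<dots> \<le> (\<Sum>y\<in>A. (sqrt (p y))\<^sup>2) * (\<Sum>y\<in>A. ((q y - p y) / sqrt (p y))\<^sup>2)"
    by (rule Cauchy_Schwarz_ineq_sum)
  also have "\<dots> = (\<Sum>y\<in>A. p y) * (\<Sum>y\<in>A. (q y - p y)\<^sup>2 / p y)"
    using posA by (simp add: power_divide less_imp_le)
  also have "\<dots> \<le> 1 * (\<Sum>y\<in>S. (q y - p y)\<^sup>2 / p y)"
  proof (rule mult_mono)
    show "(\<Sum>y\<in>A. p y) \<le> 1"
      using total pos \<open>A \<subseteq> S\<close> \<open>finite S\<close> by (metis less_imp_le sum_mono2 Diff_iff)
    show "(\<Sum>y\<in>A. (q y - p y)\<^sup>2 / p y) \<le> (\<Sum>y\<in>S. (q y - p y)\<^sup>2 / p y)"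
      using pos \<open>A \<subseteq> S\<close> \<open>finite S\<close> by (intro sum_mono2) (auto intro: divide_nonneg_pos)
    show "0 \<le> (\<Sum>y\<in>A. (q y - p y)\<^sup>2 / p y)"
      using posA by (intro sum_nonneg divide_nonneg_pos) auto
  qed simp
  finally show ?thesis by simp
qed

lemma total_variation_sq_le_chi2:
  fixes p q :: "'a \<Rightarrow> real"
  assumes "finite S" and "\<And>y. y \<in> S \<Longrightarrow> p y > 0" and "(\<Sum>y\<in>S. p y) = 1"
  shows "(SUP A\<in>Pow S. \<bar>(\<Sum>y\<in>A. q y) - (\<Sum>y\<in>A. p y)\<bar>)\<^sup>2 \<le> (\<Sum>y\<in>S. (q y - p y)\<^sup>2 / p y)"
    (is "(SUP A\<in>Pow S. ?d A)\<^sup>2 \<le> ?chi2")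
proof -
  have "?d A \<le> sqrt ?chi2" if "A \<in> Pow S" for A
    using subset_discrepancy_sq_le_chi2[OF assms, of A q] that real_le_rsqrt by auto
  then have "(SUP A\<in>Pow S. ?d A) \<le> sqrt ?chi2"
    by (intro cSUP_least) auto
  moreover have "0 \<le> (SUP A\<in>Pow S. ?d A)"
    using \<open>finite S\<close> by (intro cSUP_upper2[of _ _ "{}"]) auto
  moreover have "0 \<le> ?chi2"
    using assms(2) by (intro sum_nonneg divide_nonneg_pos) auto
  ultimately show ?thesis
    by (metis power_mono real_sqrt_pow2)
qed

lemma binomial_inversion:
  assumes "a \<le> m"
  shows "(\<Sum>j\<le>m. (-1) ^ j * real (a choose j) * real (j choose b)) = (if a = b then (-1) ^ a else 0)"
proof (cases "b \<le> a")
  case False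
  then have "(-1) ^ j * real (a choose j) * real (j choose b) = 0" for j
    by (cases "j \<le> a") auto
  then have "(\<Sum>j\<le>m. (-1) ^ j * real (a choose j) * real (j choose b)) = 0"
    by (intro sum.neutral ballI)
  then show ?thesis using False by simp
next
  case True
  have "(\<Sum>j\<le>m. (-1) ^ j * real (a choose j) * real (j choose b))
      = (\<Sum>j\<in>{b..a}. (-1) ^ j * real (a choose j) * real (j choose b))"
    using assms by (intro sum.mono_neutral_right) auto
  also have "\<dots> = (\<Sum>p\<le>a - b. (-1) ^ (p + b) * real (a choose (p + b)) * real ((p + b) choose b))"
    using True by (intro sum.reindex_bij_witness[of _ "\<lambda>p. p + b" "\<lambda>j. j - b"]) auto
  also have "\<dots> = (-1) ^ b * real (a choose b) * (\<Sum>p\<le>a - b. (-1) ^ p * real ((a - b) choose p))"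
    unfolding sum_distrib_left
  proof (intro sum.cong refl)
    fix p assume "p \<in> {..a - b}"
    then have "(a choose (p + b)) * ((p + b) choose b) = (a choose b) * ((a - b) choose p)"
      using choose_mult[of b "p + b" a] True by simp
    then show "(-1) ^ (p + b) * real (a choose (p + b)) * real ((p + b) choose b)
        = (-1) ^ b * real (a choose b) * ((-1) ^ p * real ((a - b) choose p))"
      by (simp add: power_add mult_ac flip: of_nat_mult)
  qed
  also have "\<dots> = (if a = b then (-1) ^ a else 0)"
    using True choose_alternating_sum[of "a - b", where 'a = real] by auto
  finally show ?thesis .
qed

definition binomial_matrix :: "nat \<Rightarrow> nat \<Rightarrow> real" where
  "binomial_matrix d i = real (d choose i)"

definition binomial_matrix_inv :: "nat \<Rightarrow> nat \<Rightarrow> real" where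
  "binomial_matrix_inv j e = (-1) ^ (j + e) * real (j choose e)"

lemma binomial_matrix_inverse:
  assumes "a \<le> m" "b \<le> m"
  shows "kmult {..m} binomial_matrix binomial_matrix_inv a b = of_bool (a = b)"
    and "kmult {..m} binomial_matrix_inv binomial_matrix a b = of_bool (a = b)"
proof -
  have "kmult {..m} binomial_matrix binomial_matrix_inv a b
      = (-1) ^ b * (\<Sum>j\<le>m. (-1) ^ j * real (a choose j) * real (j choose b))"
    unfolding kmult_def sum_distrib_left binomial_matrix_def binomial_matrix_inv_def
    by (intro sum.cong) (simp_all add: power_add mult_ac)
  then show "kmult {..m} binomial_matrix binomial_matrix_inv a b = of_bool (a = b)"
    using assms by (simp add: binomial_inversion flip: power_add)
  have "kmult {..m} binomial_matrix_inv binomial_matrix a b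
      = (-1) ^ a * (\<Sum>j\<le>m. (-1) ^ j * real (a choose j) * real (j choose b))"
    unfolding kmult_def sum_distrib_left binomial_matrix_def binomial_matrix_inv_def
    by (intro sum.cong) (simp_all add: power_add mult_ac)
  then show "kmult {..m} binomial_matrix_inv binomial_matrix a b = of_bool (a = b)"
    using assms by (simp add: binomial_inversion flip: power_add)
qed

lemma Suc_times_binomial_Suc_real:
  "real (Suc i) * real (d choose Suc i) = (real d - real i) * real (d choose i)"
proof (cases "i \<le> d")
  case True
  have "Suc i * (d choose Suc i) = (d - i) * (d choose i)"
    by (simp only: binomial_absorption binomial_absorb_comp)
  then have "real (Suc i * (d choose Suc i)) = real ((d - i) * (d choose i))"
    by (rule arg_cong)
  then show ?thesis
    using True by (simp only: of_nat_mult of_nat_diff)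
qed (simp add: binomial_eq_0)

lemma binomial_pred_diff_real:
  "real d * (real ((d - 1) choose Suc i) - real (d choose Suc i)) = - (real (Suc i) * real (d choose Suc i))"
proof (cases "Suc i \<le> d")
  case True
  have "(d - Suc i) * (d choose Suc i) = d * ((d - 1) choose Suc i)"
    by (rule binomial_absorb_comp)
  then have "real (d - Suc i) * real (d choose Suc i) = real d * real ((d - 1) choose Suc i)"
    by (simp only: of_nat_mult[symmetric])
  then show ?thesis
    using True by (simp add: of_nat_diff algebra_simps)
qed (simp add: binomial_eq_0)

lemma fy_move_balance:
  "fy n k l (Suc a, b, c, Suc d) * (real (Suc a) * real (Suc d))
     = fy n k l (a, Suc b, Suc c, d) * (real (Suc b) * real (Suc c))"
proof -
  have "fy n k l (Suc a, b, c, Suc d) * (real (Suc a) * real (Suc d)) = fy n k l (a, b, c, d)"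
    by (simp add: fy_def fact_Suc field_simps del: of_nat_Suc)
  moreover have "fy n k l (a, Suc b, Suc c, d) * (real (Suc b) * real (Suc c)) = fy n k l (a, b, c, d)"
    by (simp add: fy_def fact_Suc field_simps del: of_nat_Suc)
  ultimately show ?thesis by simp
qed

lemma birth_death_binomial_identity:
  fixes N n k l d i X Y :: real
  assumes "(i + 1) * Y = (d - i) * X" "N \<noteq> 0"
  shows "Y - 2 * (n - k - l + d) * ((i + 1) * Y) / N + 2 * (l - d) * (k - d) * X / N
       = (1 - 2 * (i + 1) * (n - i) / N) * Y + 2 * (k - i) * (l - i) * X / N"
proof -
  have "Y - 2 * (n - k - l + d) * ((i + 1) * Y) / N + 2 * (l - d) * (k - d) * X / N
      - ((1 - 2 * (i + 1) * (n - i) / N) * Y + 2 * (k - i) * (l - i) * X / N)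
      = 2 * (k + l - d - i) / N * ((i + 1) * Y - (d - i) * X)"
    using \<open>N \<noteq> 0\<close> by (simp add: field_simps)
  then show ?thesis
    using assms(1) by simp
qed

locale two_row_tables =
  fixes n k l :: nat
  assumes k_pos: "1 \<le> k" and k_le_l: "k \<le> l" and l_le_half: "l \<le> n div 2"
begin

lemma k_plus_l_le: "k + l \<le> n"
  using k_le_l l_le_half by linarith

lemma n_ge_2: "n \<ge> 2"
  using k_pos k_le_l l_le_half by linarith

lemma n_pos: "n > 0"
  using n_ge_2 by linarith

definition table_of :: "nat \<Rightarrow> table" where
  "table_of d = (n - k - l + d, l - d, k - d, d)"

lemma inj_table_of: "inj_on table_of {..k}"
  by (auto simp: inj_on_def table_of_def)

lemma tables_eq_image: "tables n k l = table_of ` {..k}"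
proof
  show "table_of ` {..k} \<subseteq> tables n k l"
    using k_plus_l_le k_le_l by (auto simp: table_of_def tables_def)
  show "tables n k l \<subseteq> table_of ` {..k}"
  proof
    fix x assume "x \<in> tables n k l"
    then obtain a b c d where "x = (a, b, c, d)" "a + b = n - k" "c + d = k" "a + c = n - l" "b + d = l"
      by (auto simp: tables_def)
    then have "x = table_of d" "d \<in> {..k}"
      using k_plus_l_le by (auto simp: table_of_def)
    then show "x \<in> table_of ` {..k}" by blast
  qed
qed

lemma finite_tables: "finite (tables n k l)"
  by (simp add: tables_eq_image)

lemma sum_tables: "(\<Sum>x\<in>tables n k l. f x) = (\<Sum>d\<le>k. f (table_of d))"
  by (simp add: tables_eq_image sum.reindex[OF inj_table_of])

definition down :: "nat \<Rightarrow> real" where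
  "down d = 2 * real (n - k - l + d) * real d / (real n)\<^sup>2"

definition up :: "nat \<Rightarrow> real" where
  "up d = 2 * real (l - d) * real (k - d) / (real n)\<^sup>2"

(* The random transpositions chain read through the (2,2) entry: a birth-death chain on {..k}. *)
definition bd_kernel :: "nat \<Rightarrow> nat \<Rightarrow> real" where
  "bd_kernel d e = (if e = d then 1 - down d - up d else if e + 1 = d then down d
     else if e = d + 1 then up d else 0)"

lemma rt_off_table_of:
  assumes "d \<le> k" "e \<le> k" "e \<noteq> d"
  shows "rt_off n (table_of d) (table_of e) = (if e + 1 = d then down d else if e = d + 1 then up d else 0)"
proof -
  have "table_of e \<noteq> table_of d"
    using assms by (simp add: table_of_def)
  moreover have "(1 \<le> n - k - l + d \<and> 1 \<le> d \<and> table_of e = (n - k - l + d - 1, l - d + 1, k - d + 1, d - 1))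
      \<longleftrightarrow> e + 1 = d"
    using assms k_plus_l_le k_le_l by (auto simp: table_of_def)
  moreover have "(1 \<le> l - d \<and> 1 \<le> k - d \<and> table_of e = (n - k - l + d + 1, l - d - 1, k - d - 1, d + 1))
      \<longleftrightarrow> e = d + 1"
    using assms k_plus_l_le k_le_l by (auto simp: table_of_def)
  ultimately show ?thesis
    unfolding rt_off_def by (simp add: table_of_def[of d] down_def up_def del: One_nat_def)
qed

lemma bd_kernel_apply:
  assumes "d \<le> k"
  shows "(\<Sum>e\<le>k. bd_kernel d e * f e) = f d + down d * (f (d - 1) - f d) + up d * (f (d + 1) - f d)"
proof -
  have "(\<Sum>e\<le>k. bd_kernel d e * f e) = (\<Sum>e\<le>k. of_bool (e = d) * ((1 - down d - up d) * f d))
      + (\<Sum>e\<le>k. of_bool (e + 1 = d) * (down d * f (d - 1)))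
      + (\<Sum>e\<le>k. of_bool (e = d + 1) * (up d * f (d + 1)))"
    by (simp only: sum.distrib[symmetric]) (intro sum.cong; auto simp: bd_kernel_def)
  also have "(\<Sum>e\<le>k. of_bool (e = d) * ((1 - down d - up d) * f d)) = (1 - down d - up d) * f d"
    using assms by simp
  also have "(\<Sum>e\<le>k. of_bool (e + 1 = d) * (down d * f (d - 1))) = down d * f (d - 1)"
    using assms by (cases d) (simp_all add: down_def[of 0])
  also have "(\<Sum>e\<le>k. of_bool (e = d + 1) * (up d * f (d + 1))) = up d * f (d + 1)"
    using assms by (cases "d = k") (simp_all add: up_def[of k])
  finally show ?thesis by (simp add: algebra_simps)
qed

lemma bd_kernel_row_sum: "d \<le> k \<Longrightarrow> (\<Sum>e\<le>k. bd_kernel d e) = 1"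
  using bd_kernel_apply[of d "\<lambda>_. 1"] by simp

lemma rt_table_of:
  assumes "d \<le> k" "e \<le> k"
  shows "rt n k l (table_of d) (table_of e) = bd_kernel d e"
proof (cases "e = d")
  case True
  have "tables n k l - {table_of d} = table_of ` ({..k} - {d})"
    using assms by (simp add: tables_eq_image inj_on_image_set_diff[OF inj_table_of])
  then have "(\<Sum>S\<in>tables n k l - {table_of d}. rt_off n (table_of d) S)
      = (\<Sum>e\<in>{..k} - {d}. rt_off n (table_of d) (table_of e))"
    by (simp add: sum.reindex[OF inj_on_subset[OF inj_table_of Diff_subset]])
  also have "\<dots> = (\<Sum>e\<in>{..k} - {d}. bd_kernel d e)"
    using assms by (intro sum.cong) (auto simp: rt_off_table_of bd_kernel_def)
  also have "\<dots> = 1 - bd_kernel d d"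
    using bd_kernel_row_sum[OF assms(1)] assms by (simp add: sum_diff1)
  finally show ?thesis
    using True by (simp add: rt_def)
next
  case False
  then have "table_of e \<noteq> table_of d"
    using assms by (auto simp: table_of_def)
  then show ?thesis
    using False assms by (simp add: rt_def bd_kernel_def rt_off_table_of)
qed

lemma rt_pow_table_of:
  assumes "d \<le> k" "e \<le> k"
  shows "rt_pow n k l t (table_of d) (table_of e) = kernel_pow {..k} bd_kernel t d e"
  using \<open>e \<le> k\<close>
proof (induction t arbitrary: e)
  case 0
  then show ?case using inj_table_of assms by (auto simp: inj_on_eq_iff)
next
  case (Suc t)
  then show ?case by (simp add: sum_tables rt_table_of)
qed

definition hypergeom :: "nat \<Rightarrow> real" where
  "hypergeom d = fy n k l (table_of d)"

lemma hypergeom_pos: "hypergeom d > 0"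
  by (simp add: hypergeom_def fy_def table_of_def)

lemma fy_pos: "x \<in> tables n k l \<Longrightarrow> fy n k l x > 0"
  using hypergeom_pos by (auto simp: tables_eq_image hypergeom_def)

lemma hypergeom_eq_binomial:
  assumes "d \<le> k"
  shows "hypergeom d = real (l choose d) * real ((n - l) choose (k - d)) / real (n choose k)"
proof -
  have "n - l - (k - d) = n - k - l + d"
    using assms k_plus_l_le by simp
  then have binomials: "real (l choose d) = fact l / (fact d * fact (l - d))"
      "real ((n - l) choose (k - d)) = fact (n - l) / (fact (k - d) * fact (n - k - l + d))"
      "real (n choose k) = fact n / (fact k * fact (n - k))"
    using assms k_le_l k_plus_l_le by (simp_all add: binomial_fact)
  show ?thesis
    unfolding binomials by (simp add: hypergeom_def fy_def table_of_def field_simps)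
qed

lemma hypergeom_sum: "(\<Sum>d\<le>k. hypergeom d) = 1"
proof -
  have "real (\<Sum>d\<le>k. (l choose d) * ((n - l) choose (k - d))) = real (n choose k)"
    using vandermonde[of l "n - l" k] k_plus_l_le by simp
  then have "(\<Sum>d\<le>k. real (l choose d) * real ((n - l) choose (k - d))) = real (n choose k)"
    by simp
  then show ?thesis
    using k_plus_l_le by (simp add: hypergeom_eq_binomial flip: sum_divide_distrib)
qed

lemma hypergeom_balance:
  assumes "d < k"
  shows "hypergeom d * up d = hypergeom (Suc d) * down (Suc d)"
proof -
  define a b c where "a = n - k - l + d" and "b = l - d - 1" and "c = k - d - 1"
  then have bc: "l - d = Suc b" "k - d = Suc c"
    using assms k_le_l by simp_all
  have "table_of d = (a, Suc b, Suc c, d)" "table_of (Suc d) = (Suc a, b, c, Suc d)"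
    using bc by (auto simp: table_of_def a_def)
  moreover have "up d = 2 * (real (Suc b) * real (Suc c)) / (real n)\<^sup>2"
      "down (Suc d) = 2 * (real (Suc a) * real (Suc d)) / (real n)\<^sup>2"
    using bc by (simp_all add: up_def down_def a_def)
  ultimately show ?thesis
    using fy_move_balance[of n k l a b c d] by (simp add: hypergeom_def)
qed

lemma bd_kernel_balance:
  assumes "d \<le> k" "e \<le> k"
  shows "hypergeom d * bd_kernel d e = hypergeom e * bd_kernel e d"
proof -
  consider "e = d + 1" | "d = e + 1" | "e \<noteq> d + 1" "d \<noteq> e + 1"
    by blast
  then show ?thesis
  proof cases
    case 1
    then show ?thesis using hypergeom_balance[of d] assms by (simp add: bd_kernel_def)
  next
    case 2
    then show ?thesis using hypergeom_balance[of e] assms by (simp add: bd_kernel_def)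
  qed (auto simp: bd_kernel_def)
qed

sublocale bd: reversible_kernel "{..k}" bd_kernel hypergeom
proof
  show "\<And>x y. x \<in> {..k} \<Longrightarrow> y \<in> {..k} \<Longrightarrow> hypergeom x * bd_kernel x y = hypergeom y * bd_kernel y x"
    using bd_kernel_balance by simp
qed (simp_all add: hypergeom_pos hypergeom_sum bd_kernel_row_sum)

lemma chi2_table_of:
  assumes "d \<le> k"
  shows "chi2 n k l t (table_of d) = (\<Sum>e\<le>k. (kernel_pow {..k} bd_kernel t d e - hypergeom e)\<^sup>2 / hypergeom e)"
  unfolding chi2_def sum_tables hypergeom_def
  by (intro sum.cong refl) (simp add: rt_pow_table_of assms)

lemma chi2_average_eq_trace:
  "(\<Sum>x\<in>tables n k l. fy n k l x * chi2 n k l t x) = (\<Sum>d\<le>k. kernel_pow {..k} bd_kernel (2 * t) d d) - 1"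
proof -
  have "(\<Sum>x\<in>tables n k l. fy n k l x * chi2 n k l t x)
      = (\<Sum>d\<le>k. hypergeom d * (\<Sum>e\<le>k. (kernel_pow {..k} bd_kernel t d e - hypergeom e)\<^sup>2 / hypergeom e))"
    unfolding sum_tables hypergeom_def[symmetric] by (intro sum.cong refl) (simp add: chi2_table_of)
  also have "\<dots> = (\<Sum>d\<le>k. kernel_pow {..k} bd_kernel (2 * t) d d) - 1"
    by (rule bd.chi2_average_eq_trace)
  finally show ?thesis .
qed

definition eigenvalue :: "nat \<Rightarrow> real" where
  "eigenvalue j = 1 - 2 * real j * (real n - real j + 1) / (real n)\<^sup>2"

(* The conjugate of bd_kernel by binomial_matrix (see bd_kernel_binomial). *)
definition bd_upper :: "nat \<Rightarrow> nat \<Rightarrow> real" where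
  "bd_upper i j = (if i = j then eigenvalue j
     else if i + 1 = j then 2 * (real k - real i) * (real l - real i) / (real n)\<^sup>2 else 0)"

lemma bd_kernel_binomial_Suc:
  assumes "d \<le> k"
  shows "kmult {..k} bd_kernel binomial_matrix d (Suc i)
       = (1 - 2 * (real i + 1) * (real n - real i) / (real n)\<^sup>2) * real (d choose Suc i)
         + 2 * (real k - real i) * (real l - real i) * real (d choose i) / (real n)\<^sup>2"
proof -
  let ?X = "real (d choose i)" and ?Y = "real (d choose Suc i)" and ?N = "(real n)\<^sup>2"
  have "down d * (real ((d - 1) choose Suc i) - ?Y)
      = 2 * real (n - k - l + d) / ?N * (real d * (real ((d - 1) choose Suc i) - ?Y))"
    by (simp add: down_def)
  also have "\<dots> = 2 * real (n - k - l + d) / ?N * - ((real i + 1) * ?Y)"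
    unfolding binomial_pred_diff_real by simp
  finally have down_term: "down d * (real ((d - 1) choose Suc i) - ?Y) = \<dots>" .
  have up_term: "up d * ?X = 2 * (real l - real d) * (real k - real d) * ?X / ?N"
    using assms k_le_l by (simp add: up_def of_nat_diff)
  have "kmult {..k} bd_kernel binomial_matrix d (Suc i)
      = ?Y + down d * (real ((d - 1) choose Suc i) - ?Y) + up d * ?X"
    unfolding kmult_def binomial_matrix_def using assms by (simp only: bd_kernel_apply) simp
  also have "\<dots> = ?Y - 2 * (real n - real k - real l + real d) * ((real i + 1) * ?Y) / ?N
      + 2 * (real l - real d) * (real k - real d) * ?X / ?N"
  proof -
    have "real (n - k - l + d) = real n - real k - real l + real d"
      using k_plus_l_le by simp
    then show ?thesis
      unfolding down_term up_term using n_pos by (simp add: field_simps)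
  qed
  also have "\<dots> = (1 - 2 * (real i + 1) * (real n - real i) / ?N) * ?Y
      + 2 * (real k - real i) * (real l - real i) * ?X / ?N"
    using Suc_times_binomial_Suc_real[of i d] n_pos
    by (intro birth_death_binomial_identity) (simp_all add: add.commute)
  finally show ?thesis .
qed

lemma bd_kernel_binomial:
  assumes "d \<le> k" "j \<le> k"
  shows "kmult {..k} bd_kernel binomial_matrix d j = kmult {..k} binomial_matrix bd_upper d j"
proof (cases j)
  case 0
  have "kmult {..k} binomial_matrix bd_upper d 0 = (\<Sum>m\<le>k. of_bool (m = 0))"
    unfolding kmult_def by (intro sum.cong) (auto simp: binomial_matrix_def bd_upper_def eigenvalue_def)
  then show ?thesis
    using assms 0 by (simp add: kmult_def binomial_matrix_def bd_kernel_row_sum)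
next
  case (Suc i)
  define g where "g = 2 * (real k - real i) * (real l - real i) / (real n)\<^sup>2"
  have "kmult {..k} bd_kernel binomial_matrix d j
      = real (d choose Suc i) * eigenvalue j + real (d choose i) * g"
    using assms n_pos by (simp add: Suc bd_kernel_binomial_Suc eigenvalue_def g_def field_simps)
  also have "\<dots> = (\<Sum>m\<le>k. of_bool (m = j) * (real (d choose Suc i) * eigenvalue j)
      + of_bool (m = i) * (real (d choose i) * g))"
    using assms Suc by (simp add: sum.distrib)
  also have "\<dots> = kmult {..k} binomial_matrix bd_upper d j"
    unfolding kmult_def using Suc by (intro sum.cong) (auto simp: binomial_matrix_def bd_upper_def g_def)
  finally show ?thesis .
qed

lemma trace_bd_kernel_pow: "(\<Sum>d\<le>k. kernel_pow {..k} bd_kernel t d d) = (\<Sum>j\<le>k. eigenvalue j ^ t)"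
proof -
  have "(\<Sum>d\<le>k. kernel_pow {..k} bd_kernel t d d) = (\<Sum>j\<le>k. kernel_pow {..k} bd_upper t j j)"
    by (rule trace_kernel_pow_similar[OF _ binomial_matrix_inverse bd_kernel_binomial]) auto
  also have "\<dots> = (\<Sum>j\<le>k. bd_upper j j ^ t)"
    by (intro sum.cong refl kernel_pow_upper_triangular_diag) (auto simp: bd_upper_def)
  also have "\<dots> = (\<Sum>j\<le>k. eigenvalue j ^ t)"
    by (simp add: bd_upper_def)
  finally show ?thesis .
qed

lemma chi2_average_eq_eigenvalues:
  "(\<Sum>x\<in>tables n k l. fy n k l x * chi2 n k l t x) = (\<Sum>j\<in>{1..k}. eigenvalue j ^ (2 * t))"
proof -
  have "{..k} = insert 0 {1..k}"
    by auto
  then show ?thesis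
    unfolding chi2_average_eq_trace trace_bd_kernel_pow by (simp add: eigenvalue_def)
qed

lemma eigenvalue_one: "eigenvalue 1 = 1 - 2 / real n"
  using n_pos by (simp add: eigenvalue_def power2_eq_square)

lemma eigenvalue_bounds:
  assumes "1 \<le> j" "j \<le> k"
  shows "0 \<le> eigenvalue j" "eigenvalue j \<le> eigenvalue 1"
proof -
  have "2 * real j \<le> real n"
    using assms k_le_l k_plus_l_le by linarith
  then have "2 * real j * (real n - real j + 1) \<le> real n * real n"
    using assms by (intro mult_mono) auto
  then show "0 \<le> eigenvalue j"
    using n_pos by (simp add: eigenvalue_def power2_eq_square field_simps)
  have "0 \<le> (real j - 1) * (real n - real j)"
    using assms \<open>2 * real j \<le> real n\<close> by (intro mult_nonneg_nonneg) auto
  then show "eigenvalue j \<le> eigenvalue 1"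
    using n_pos by (simp add: eigenvalue_def divide_right_mono algebra_simps)
qed

lemma chi2_average_upper:
  "(\<Sum>x\<in>tables n k l. fy n k l x * chi2 n k l t x) \<le> real k * exp (- 4 * real t / real n)"
proof -
  have "2 / real n \<le> 1"
    using n_ge_2 by simp
  then have "(1 - 2 / real n) ^ (2 * t) \<le> exp (- 2 / real n) ^ (2 * t)"
    using exp_ge_add_one_self[of "- 2 / real n"] by (intro power_mono) simp_all
  then have "real k * (1 - 2 / real n) ^ (2 * t) \<le> real k * exp (- 2 / real n) ^ (2 * t)"
    by (rule mult_left_mono) simp
  moreover have "(\<Sum>x\<in>tables n k l. fy n k l x * chi2 n k l t x) \<le> (\<Sum>j\<in>{1..k}. (1 - 2 / real n) ^ (2 * t))"
    unfolding chi2_average_eq_eigenvalues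
    by (intro sum_mono power_mono) (use eigenvalue_bounds eigenvalue_one in auto)
  moreover have "exp (- 2 / real n) ^ (2 * t) = exp (- 4 * real t / real n)"
    by (simp add: exp_of_nat_mult[symmetric])
  ultimately show ?thesis
    by simp
qed

lemma chi2_average_lower:
  "1 - 4 * real t / real n \<le> (\<Sum>x\<in>tables n k l. fy n k l x * chi2 n k l t x)"
proof -
  have "1 - 4 * real t / real n = 1 + real (2 * t) * (- 2 / real n)"
    by simp
  also have "\<dots> \<le> (1 - 2 / real n) ^ (2 * t)"
    using Bernoulli_inequality[of "- 2 / real n" "2 * t"] n_ge_2 by simp
  also have "\<dots> = eigenvalue 1 ^ (2 * t)"
    by (simp only: eigenvalue_one)
  also have "\<dots> \<le> (\<Sum>j\<in>{1..k}. eigenvalue j ^ (2 * t))"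
    by (rule member_le_sum) (use k_pos eigenvalue_bounds in auto)
  finally show ?thesis
    by (simp add: chi2_average_eq_eigenvalues)
qed

lemma tv_average_le_chi2_average:
  "(\<Sum>x\<in>tables n k l. fy n k l x * (tv_dist n k l t x)\<^sup>2) \<le> (\<Sum>x\<in>tables n k l. fy n k l x * chi2 n k l t x)"
proof (intro sum_mono mult_left_mono)
  show "(tv_dist n k l t x)\<^sup>2 \<le> chi2 n k l t x" for x
    unfolding tv_dist_def chi2_def
    using finite_tables hypergeom_sum fy_pos
    by (intro total_variation_sq_le_chi2) (auto simp: sum_tables hypergeom_def)
qed (auto intro: less_imp_le fy_pos)

end

theorem lemma3p2:
  fixes n k l :: nat
  assumes "1 \<le> k" and "k \<le> l" and "l \<le> n div 2"
  shows "(\<forall>(c::real) (t::nat). c > 0 \<longrightarrow> real t = (real n / 4) * (ln (real k) + c) \<longrightarrow>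
            (\<Sum>x\<in>tables n k l. fy n k l x * (tv_dist n k l t x)^2) \<le> exp (- c))
       \<and> (\<forall>(c::real) (t::nat). real t = c * real n / 4 \<longrightarrow>
            (\<Sum>x\<in>tables n k l. fy n k l x * chi2 n k l t x) \<ge> 1 - c)"
proof -
  interpret two_row_tables n k l
    using assms by unfold_locales
  show ?thesis
  proof (intro conjI allI impI)
    \<comment> \<open>The bound holds for every real c.\<close>
    fix c :: real and t :: nat
    assume "real t = (real n / 4) * (ln (real k) + c)"
    then have exponent: "- 4 * real t / real n = - ln (real k) - c"
      using n_pos by (simp add: field_simps)
    have "(\<Sum>x\<in>tables n k l. fy n k l x * (tv_dist n k l t x)^2)
        \<le> (\<Sum>x\<in>tables n k l. fy n k l x * chi2 n k l t x)"
      by (rule tv_average_le_chi2_average)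
    also have "\<dots> \<le> real k * exp (- ln (real k) - c)"
      using chi2_average_upper[of t] unfolding exponent .
    also have "\<dots> = exp (- c)"
      using k_pos by (simp add: exp_diff exp_minus inverse_eq_divide)
    finally show "(\<Sum>x\<in>tables n k l. fy n k l x * (tv_dist n k l t x)^2) \<le> exp (- c)" .
  next
    fix c :: real and t :: nat
    assume "real t = c * real n / 4"
    then have "1 - c = 1 - 4 * real t / real n"
      using n_pos by (simp add: field_simps)
    then show "(\<Sum>x\<in>tables n k l. fy n k l x * chi2 n k l t x) \<ge> 1 - c"
      using chi2_average_lower by simp
  qed
qed

end
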